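(* Let $0\le q\le 1$ and let $\mathcal{H}$ be a real Hilbert space with inner product $\langle\cdot|\cdot\rangle$. Let $\mathcal{F}_q^{disc}(\mathcal{H})$ be the $q$-discrete Fock space, with vacuum vector $\Omega$, and let $C(f)$, $C^+(f)$ ($f\in\mathcal{H}$) be the $q$-discrete annihilation and creation operators and $\widehat{G}(f)=C(f)+C^+(f)$, all as described in the context. Then: (1) for all $f_1,\dots,f_{2n}\in\mathcal{H}$ with $\|f_i\|=1$, $$\langle \widehat{G}(f_1)\cdots\widehat{G}(f_{2n})\Omega\,|\,\Omega\rangle=\sum_{\mathcal{V}\in P_2(2n)} q^{\frac12 ip(\mathcal{V})+cr(\mathcal{V})}\prod_{(i,j)\in\mathcal{V}}\langle f_i|f_j\rangle;$$ (2) for every unit vector $f\in\mathcal{H}$ and every $n\ge1$, $$\int x^{2n}\,d\mu_q^I(x)=\langle \widehat{G}(f)^{2n}\Omega\,|\,\Omega\rangle=[1]_q[3]_q\cdots[2n-1]_q=\sum_{\mathcal{V}\in P_2(2n)}q^{e_0(\mathcal{V})},$$ where $e_0(\mathcal{V})=pbr(\mathcal{V})+2cr(\mathcal{V})=\tfrac12 ip(\mathcal{V})+cr(\mathcal{V})$; (3) for all $f,g\in\mathcal{H}$, $$C(f)C^+(g)-q^2C^+(g)C(f)=q^N\langle f,g\rangle I,$$ where $N$ is the number operator, $N\xi=n\xi$ for $\xi\in\mathcal{H}^{\otimes n}$.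
   Context: Notation: $[n]_q=1+q+\dots+q^{n-1}$. $P_2(2n)$ is the set of pair partitions of $\{1,\dots,2n\}$; a pair $(i,j)\in\mathcal{V}$ is written with $i<j$. For $\mathcal{V}\in P_2(2n)$: $cr(\mathcal{V})=\#\{$pairs of blocks $(a,b),(c,d)\in\mathcal{V}$ with $a<c<b<d\}$ (crossings); $pbr(\mathcal{V})=\#\{$pairs of blocks $(a,b),(c,d)\in\mathcal{V}$ with $a<c<d<b\}$ (nestings); $ip(\mathcal{V})=\sum_{(i,j)\in\mathcal{V}}(j-i-1)$. The $q$-discrete Fock space: on the algebraic full Fock space $\bigoplus_{n\ge0}\mathcal{H}^{\otimes n}$ (with $\mathcal{H}^{\otimes 0}=\mathbb{C}\Omega$, $\|\Omega\|=1$) define the positive semidefinite inner product $$\langle x_1\otimes\cdots\otimes x_n\,|\,y_1\otimes\cdots\otimes y_m\rangle_q=\delta_{n,m}\,q^{\binom n2}\sum_{\pi\in S(n)}q^{inv(\pi)}\langle x_1|y_{\pi(1)}\rangle\cdots\langle x_n|y_{\pi(n)}\rangle,$$ where $inv(\pi)=\#\{i<j:\pi(i)>\pi(j)\}$; $\mathcal{F}_q^{disc}(\mathcal{H})$ is the completion (after quotienting null vectors). Creation: $C^+(f)\xi=f\otimes\xi$ for $\xi\in\mathcal{H}^{\otimes n}$, $C^+(f)\Omega=f$. Annihilation: $C(f)\Omega=0$ and $$C(f)\,x_1\otimes\cdots\otimes x_n=q^{n-1}\sum_{k=1}^n q^{k-1}\langle x_k|f\rangle\, x_1\otimes\cdots\otimes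 \check{x}_k\otimes\cdots\otimes x_n,$$ where $\check{x}_k$ means $x_k$ is omitted; $C(f)$ is the adjoint of $C^+(f)$ for $\langle\cdot|\cdot\rangle_q$. The type I discrete $q$-Hermite polynomials are given by $h_0=1$, $h_1(x)=x$, $xh_n(x)=h_{n+1}(x)+q^{n-1}[n]_q h_{n-1}(x)$; $\mu_q^I$ denotes the probability measure on $\mathbb{R}$ with respect to which they are orthogonal. *)

theory Defs
  imports "HOL-Probability.Probability" "HOL-Combinatorics.Permutations"
begin

definition qint :: "real \<Rightarrow> nat \<Rightarrow> real" where
  "qint q n = (\<Sum>k<n. q ^ k)"

text \<open>A vector of the algebraic full Fock space is represented as a finite formal
  linear combination of elementary tensors x1 (x) ... (x) xn, i.e. a list of pairs
  (coefficient, [x1,...,xn]); the empty list of vectors is the vacuum.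
  Multilinearity relations become null vectors for the q-inner product, so the
  pre-Hilbert space F_q^disc is this space modulo null vectors.\<close>

type_synonym 'a fock = "(real \<times> 'a list) list"

definition vac :: "'a fock" where
  "vac = [(1, [])]"

definition inv_count :: "nat \<Rightarrow> (nat \<Rightarrow> nat) \<Rightarrow> nat" where
  "inv_count n p = card {(i, j). i < j \<and> j < n \<and> p j < p i}"

definition tens_inner :: "real \<Rightarrow> 'a::real_inner list \<Rightarrow> 'a list \<Rightarrow> real" where
  "tens_inner q xs ys =
     (if length xs = length ys then
        q ^ (length xs choose 2) *
        (\<Sum>p \<in> {p. p permutes {..<length xs}}.
            q ^ inv_count (length xs) p * (\<Prod>i<length xs. inner (xs ! i) (ys ! p i)))
      else 0)"

definition fock_inner :: "real \<Rightarrow> 'a::real_inner fock \<Rightarrow> 'a fock \<Rightarrow> real" where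
  "fock_inner q u v = sum_list [c * d * tens_inner q xs ys. (c, xs) \<leftarrow> u, (d, ys) \<leftarrow> v]"

definition fock_null :: "real \<Rightarrow> 'a::real_inner fock \<Rightarrow> bool" where
  "fock_null q u \<longleftrightarrow> fock_inner q u u = 0"

definition fock_scale :: "real \<Rightarrow> 'a fock \<Rightarrow> 'a fock" where
  "fock_scale a u = map (\<lambda>(c, xs). (a * c, xs)) u"

definition fock_add :: "'a fock \<Rightarrow> 'a fock \<Rightarrow> 'a fock" where
  "fock_add u v = u @ v"

definition fock_diff :: "'a fock \<Rightarrow> 'a fock \<Rightarrow> 'a fock" where
  "fock_diff u v = u @ fock_scale (-1) v"

definition cre :: "'a \<Rightarrow> 'a fock \<Rightarrow> 'a fock" where
  "cre f u = map (\<lambda>(c, xs). (c, f # xs)) u"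

text \<open>Annihilation operator C(f): on x1 (x) ... (x) xn gives
  q^(n-1) * sum_{k=1}^n q^(k-1) <x_k|f> x1 ... (omit x_k) ... xn (here k is 0-based).\<close>
definition ann :: "real \<Rightarrow> 'a::real_inner \<Rightarrow> 'a fock \<Rightarrow> 'a fock" where
  "ann q f u = concat (map (\<lambda>(c, xs).
      [(c * q ^ (length xs - 1) * q ^ k * inner (xs ! k) f, take k xs @ drop (Suc k) xs).
         k \<leftarrow> [0..<length xs]]) u)"

definition Ghat :: "real \<Rightarrow> 'a::real_inner \<Rightarrow> 'a fock \<Rightarrow> 'a fock" where
  "Ghat q f u = fock_add (ann q f u) (cre f u)"

definition qN :: "real \<Rightarrow> 'a fock \<Rightarrow> 'a fock" where
  "qN q u = map (\<lambda>(c, xs). (q ^ length xs * c, xs)) u"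

definition pair_partitions :: "nat \<Rightarrow> (nat \<times> nat) set set" where
  "pair_partitions m = {V. V \<subseteq> {(i, j). 1 \<le> i \<and> i < j \<and> j \<le> m} \<and>
       (\<forall>k\<in>{1..m}. \<exists>!p\<in>V. k = fst p \<or> k = snd p)}"

definition cr :: "(nat \<times> nat) set \<Rightarrow> nat" where
  "cr V = card {((a, b), (c, d)). (a, b) \<in> V \<and> (c, d) \<in> V \<and> a < c \<and> c < b \<and> b < d}"

definition pbr :: "(nat \<times> nat) set \<Rightarrow> nat" where
  "pbr V = card {((a, b), (c, d)). (a, b) \<in> V \<and> (c, d) \<in> V \<and> a < c \<and> c < d \<and> d < b}"

definition ip :: "(nat \<times> nat) set \<Rightarrow> nat" where
  "ip V = (\<Sum>(i, j)\<in>V. j - i - 1)"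

fun hermI :: "real \<Rightarrow> nat \<Rightarrow> real \<Rightarrow> real" where
  "hermI q 0 x = 1"
| "hermI q (Suc 0) x = x"
| "hermI q (Suc (Suc n)) x = x * hermI q (Suc n) x - q ^ n * qint q (Suc n) * hermI q n x"

definition is_muI :: "real \<Rightarrow> real measure \<Rightarrow> bool" where
  "is_muI q \<mu> \<longleftrightarrow> prob_space \<mu> \<and> sets \<mu> = sets borel \<and>
     (\<forall>k. integrable \<mu> (\<lambda>x. x ^ k)) \<and>
     (\<forall>m n. m \<noteq> n \<longrightarrow> (\<integral>x. hermI q m x * hermI q n x \<partial>\<mu>) = 0)"

end

theory Submission
  imports Defs
begin

(*
  Operators on formal combinations of tensors are handled through their transposes on
  coefficient functionals T, via fock_lin T (Ghat q f u) = fock_lin (Ghat_transpose q f T) u;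
  the vacuum expectation is the functional reading off the coefficient of the empty tensor.
  The q-commutation relation (3) then becomes a pointwise identity between transposes.

  For (1), expand Ghat(f_1) ... Ghat(f_m) Omega from the right: every annihilation at i
  removes a vector f_j created earlier (j > i), which produces an arc (i, j) and the power
  of q recorded by arc_exponent. Summed over the arcs of a pair partition these powers give
  pbr + 2 cr, and ip = 2 (pbr + cr).

  For (2), both the integral of x^m h_k and the Omega-coefficient of Ghat(f)^m f^(x)k obey the
  recursion coming from x h_k = h_(k+1) + q^(k-1) [k] h_(k-1); its solution at m = 2n, k = 0
  is [1] [3] ... [2n-1], and with constant f formula (1) becomes the pair partition sum.
*)

section \<open>Coefficient functionals and transposed operators\<close>

definition fock_lin :: "('a list \<Rightarrow> real) \<Rightarrow> 'a fock \<Rightarrow> real" where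
  "fock_lin T u = (\<Sum>(c, xs)\<leftarrow>u. c * T xs)"

lemma fock_lin_Nil [simp]: "fock_lin T [] = 0"
  by (simp add: fock_lin_def)

lemma fock_lin_Cons [simp]: "fock_lin T ((c, xs) # u) = c * T xs + fock_lin T u"
  by (simp add: fock_lin_def)

lemma fock_lin_append [simp]: "fock_lin T (u @ v) = fock_lin T u + fock_lin T v"
  by (simp add: fock_lin_def)

lemma fock_lin_zero [simp]: "fock_lin (\<lambda>_. 0) u = 0"
  by (induction u) auto

lemma fock_lin_diff: "fock_lin (\<lambda>xs. S xs - T xs) u = fock_lin S u - fock_lin T u"
  by (induction u) (auto simp: algebra_simps)

lemma fock_lin_cmult: "fock_lin (\<lambda>xs. a * T xs) u = a * fock_lin T u"
  by (induction u) (auto simp: algebra_simps)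

lemma fock_lin_scale: "fock_lin T (fock_scale a u) = a * fock_lin T u"
  by (induction u) (auto simp: fock_scale_def algebra_simps)

lemma fock_lin_qN: "fock_lin T (qN q u) = fock_lin (\<lambda>xs. q ^ length xs * T xs) u"
  by (induction u) (auto simp: qN_def algebra_simps)

lemma fock_lin_cre: "fock_lin T (cre g u) = fock_lin (\<lambda>xs. T (g # xs)) u"
  by (induction u) (auto simp: cre_def)

definition ann_transpose :: "real \<Rightarrow> 'a::real_inner \<Rightarrow> ('a list \<Rightarrow> real) \<Rightarrow> 'a list \<Rightarrow> real" where
  "ann_transpose q f T xs = (\<Sum>k<length xs.
     q ^ (length xs - 1) * q ^ k * inner (xs ! k) f * T (take k xs @ drop (Suc k) xs))"

definition Ghat_transpose :: "real \<Rightarrow> 'a::real_inner \<Rightarrow> ('a list \<Rightarrow> real) \<Rightarrow> 'a list \<Rightarrow> real" where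
  "Ghat_transpose q f T xs = ann_transpose q f T xs + T (f # xs)"

lemma fock_lin_ann: "fock_lin T (ann q f u) = fock_lin (ann_transpose q f T) u"
proof (induction u)
  case (Cons a u)
  obtain c xs where a: "a = (c, xs)" by force
  have "fock_lin T [(c * q ^ (length xs - 1) * q ^ k * inner (xs ! k) f, take k xs @ drop (Suc k) xs).
      k \<leftarrow> [0..<length xs]] = c * ann_transpose q f T xs"
    by (simp add: ann_transpose_def fock_lin_def sum_list_sum_nth atLeast0LessThan
        sum_distrib_left mult.assoc)
  then show ?case using Cons by (simp add: a ann_def)
qed (simp add: ann_def)

lemma fock_lin_Ghat: "fock_lin T (Ghat q f u) = fock_lin (Ghat_transpose q f T) u"
  by (induction u)
    (auto simp: Ghat_def fock_add_def Ghat_transpose_def fock_lin_ann fock_lin_cre algebra_simps)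

lemma fock_lin_foldr_Ghat:
  "fock_lin T (foldr (Ghat q) fs u) = fock_lin (fold (Ghat_transpose q) fs T) u"
  by (induction fs arbitrary: T) (simp_all add: fock_lin_Ghat)

lemma fock_inner_eq_fock_lin: "fock_inner q u v = fock_lin (\<lambda>xs. fock_inner q [(1, xs)] v) u"
proof (induction u)
  case (Cons a u)
  have "(\<Sum>(d, ys)\<leftarrow>v. c * d * tens_inner q xs ys) = c * (\<Sum>(d, ys)\<leftarrow>v. d * tens_inner q xs ys)"
    for c :: real and xs
    by (induction v) (auto simp: algebra_simps)
  with Cons show ?case by (cases a) (simp add: fock_inner_def)
qed (simp add: fock_inner_def)

lemma fock_null_if_fock_lin_eq_0: "(\<And>T. fock_lin T u = 0) \<Longrightarrow> fock_null q u"
  unfolding fock_null_def by (subst fock_inner_eq_fock_lin) simp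

lemma ann_transpose_Cons:
  "ann_transpose q f T (g # xs)
     = q ^ length xs * inner g f * T xs + q\<^sup>2 * ann_transpose q f (\<lambda>ys. T (g # ys)) xs"
proof -
  have "ann_transpose q f T (g # xs) = q ^ length xs * inner g f * T xs
      + (\<Sum>k<length xs. q ^ length xs * q ^ Suc k * inner (xs ! k) f
          * T (g # (take k xs @ drop (Suc k) xs)))"
    unfolding ann_transpose_def by (simp only: length_Cons sum.lessThan_Suc_shift) simp
  also have "(\<Sum>k<length xs. q ^ length xs * q ^ Suc k * inner (xs ! k) f
          * T (g # (take k xs @ drop (Suc k) xs)))
      = q\<^sup>2 * ann_transpose q f (\<lambda>ys. T (g # ys)) xs"
    unfolding ann_transpose_def sum_distrib_left
  proof (rule sum.cong)
    fix k assume "k \<in> {..<length xs}"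
    then have "q ^ length xs = q * q ^ (length xs - 1)" by (cases xs) auto
    then show "q ^ length xs * q ^ Suc k * inner (xs ! k) f * T (g # (take k xs @ drop (Suc k) xs))
      = q\<^sup>2 * (q ^ (length xs - 1) * q ^ k * inner (xs ! k) f
          * T (g # (take k xs @ drop (Suc k) xs)))"
      by (simp add: power2_eq_square)
  qed simp
  finally show ?thesis .
qed

lemma ann_cre_commutation:
  fixes f g :: "'a::real_inner"
  shows "fock_null q
     (fock_diff (fock_diff (ann q f (cre g u)) (fock_scale (q\<^sup>2) (cre g (ann q f u))))
        (fock_scale (inner f g) (qN q u)))"
proof (rule fock_null_if_fock_lin_eq_0)
  fix T
  have "fock_lin T (fock_diff (fock_diff (ann q f (cre g u)) (fock_scale (q\<^sup>2) (cre g (ann q f u))))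
      (fock_scale (inner f g) (qN q u)))
    = fock_lin T (ann q f (cre g u)) - q\<^sup>2 * fock_lin T (cre g (ann q f u))
      - inner f g * fock_lin T (qN q u)"
    by (simp add: fock_diff_def fock_lin_scale)
  also have "\<dots> = fock_lin (\<lambda>xs. ann_transpose q f T (g # xs)
      - q\<^sup>2 * ann_transpose q f (\<lambda>ys. T (g # ys)) xs - inner f g * (q ^ length xs * T xs)) u"
    unfolding fock_lin_ann fock_lin_cre fock_lin_qN fock_lin_diff fock_lin_cmult ..
  also have "\<dots> = 0"
    by (simp add: ann_transpose_Cons inner_commute)
  finally show "fock_lin T (fock_diff (fock_diff (ann q f (cre g u))
      (fock_scale (q\<^sup>2) (cre g (ann q f u)))) (fock_scale (inner f g) (qN q u))) = 0" .
qed

definition vac_coeff :: "'a list \<Rightarrow> real" where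
  "vac_coeff xs = (if xs = [] then 1 else 0)"

lemma vac_expectation_foldr_Ghat:
  "fock_inner q (foldr (Ghat q) fs vac) vac = fold (Ghat_transpose q) fs vac_coeff []"
proof -
  have "fock_inner q [(1, xs)] vac = vac_coeff xs" for xs :: "'a list"
    by (simp add: vac_def fock_inner_def tens_inner_def inv_count_def binomial_eq_0 vac_coeff_def)
  then have "fock_inner q u vac = fock_lin vac_coeff u" for u :: "'a fock"
    by (subst fock_inner_eq_fock_lin) simp
  then show ?thesis by (simp add: fock_lin_foldr_Ghat vac_def)
qed

section \<open>Moments of the type I discrete q-Hermite measure\<close>

lemma qint_0 [simp]: "qint q 0 = 0"
  by (simp add: qint_def)

lemma qint_add: "qint q (a + b) = qint q a + q ^ a * qint q b"
  by (induction b) (simp_all add: qint_def algebra_simps power_add)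

text \<open>The common value of the integral of \<open>x ^ m * hermI q k x\<close> and of the
  \<open>\<Omega>\<close>-coefficient of \<open>Ghat(f) ^ m\<close> applied to \<open>f\<close> tensored \<open>k\<close> times. For \<open>k = 0\<close>
  the first summand vanishes because \<open>qint q 0 = 0\<close>, so the truncated \<open>k - 1\<close> is harmless.\<close>

fun mixed_moment :: "real \<Rightarrow> nat \<Rightarrow> nat \<Rightarrow> real" where
  "mixed_moment q 0 k = (if k = 0 then 1 else 0)"
| "mixed_moment q (Suc m) k =
     q ^ (k - 1) * qint q k * mixed_moment q m (k - 1) + mixed_moment q m (Suc k)"

lemma mixed_moment_eq_0: "m < k \<Longrightarrow> mixed_moment q m k = 0"
  by (induction m arbitrary: k) auto

definition qdfact :: "real \<Rightarrow> nat \<Rightarrow> real" where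
  "qdfact q n = (\<Prod>i\<in>{1..n}. qint q (2 * i - 1))"

lemma qdfact_Suc: "qdfact q (Suc n) = qdfact q n * qint q (2 * n + 1)"
  by (simp add: qdfact_def)

lemma Suc_choose_two: "Suc n choose 2 = (n choose 2) + n"
  by (simp add: numeral_2_eq_2)

lemma mixed_moment_closed_form:
  "mixed_moment q (k + 2 * j) k = q ^ (k choose 2) * qdfact q j * (\<Prod>i<k. qint q (2 * j + Suc i))"
proof (induction "k + 2 * j" arbitrary: k j)
  case 0
  then show ?case by (simp add: qdfact_def binomial_eq_0)
next
  case (Suc m)
  consider (k0) j' where "k = 0" "j = Suc j'" | (j0) k' where "k = Suc k'" "j = 0"
    | (both) k' j' where "k = Suc k'" "j = Suc j'"
    using Suc.hyps(2) by (cases k; cases j) auto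
  then show ?case
  proof cases
    case k0
    with Suc.hyps(2) have "m = 1 + 2 * j'" by simp
    with k0 show ?thesis using Suc.hyps(1)[of 1 j'] by (simp add: qdfact_Suc binomial_eq_0)
  next
    case j0
    with Suc.hyps(2) have "m = k' + 2 * 0" by simp
    with j0 show ?thesis using Suc.hyps(1)[of k' 0] mixed_moment_eq_0[of m "Suc k" q]
      by (simp add: prod.lessThan_Suc power_add Suc_choose_two)
  next
    case both
    with Suc.hyps(2) have m: "m = k' + 2 * j" "m = Suc (Suc k') + 2 * j'" by simp_all
    define R where "R = (\<Prod>i<k'. qint q (2 * j + Suc i))"
    have IH1: "mixed_moment q m k' = q ^ (k' choose 2) * qdfact q j * R"
      using Suc.hyps(1)[OF m(1)] m(1) by (simp add: R_def)
    have "(\<Prod>i<Suc (Suc k'). qint q (2 * j' + Suc i)) = qint q (2 * j' + 1) * qint q (2 * j) * R"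
      by (simp only: prod.lessThan_Suc_shift) (simp add: R_def both algebra_simps)
    then have IH2: "mixed_moment q m (Suc (Suc k'))
        = q ^ (Suc (Suc k') choose 2) * qdfact q j * qint q (2 * j) * R"
      using Suc.hyps(1)[OF m(2)] m(2) both by (simp add: qdfact_Suc del: mixed_moment.simps)
    have "qint q (2 * j + Suc k') = qint q (Suc k') + q ^ Suc k' * qint q (2 * j)"
      using qint_add[of q "Suc k'" "2 * j"] by (simp add: add.commute)
    moreover have "Suc k' + 2 * j = Suc m" using Suc.hyps(2) both by simp
    ultimately show ?thesis
      unfolding both(1) \<open>Suc k' + 2 * j = Suc m\<close> mixed_moment.simps diff_Suc_1 IH1 IH2
        prod.lessThan_Suc R_def[symmetric]
      by (simp add: Suc_choose_two power_add algebra_simps)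
  qed
qed

lemma mixed_moment_even_0: "mixed_moment q (2 * n) 0 = qdfact q n"
  using mixed_moment_closed_form[of q 0 n] by (simp add: binomial_eq_0)

lemma Ghat_transpose_power_replicate:
  fixes f :: "'a::real_inner"
  assumes "inner f f = 1"
  shows "(Ghat_transpose q f ^^ m) vac_coeff (replicate k f) = mixed_moment q m k"
proof (induction m arbitrary: k)
  case 0
  then show ?case by (simp add: vac_coeff_def)
next
  case (Suc m)
  have "take i (replicate k f) @ drop (Suc i) (replicate k f) = replicate (k - 1) f"
    if "i < k" for i
    using that by (simp add: replicate_add[symmetric])
  then have ann: "ann_transpose q f ((Ghat_transpose q f ^^ m) vac_coeff) (replicate k f)
      = q ^ (k - 1) * qint q k * mixed_moment q m (k - 1)"
    by (simp add: ann_transpose_def assms Suc.IH qint_def sum_distrib_left sum_distrib_right)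
  have "(Ghat_transpose q f ^^ Suc m) vac_coeff (replicate k f)
      = ann_transpose q f ((Ghat_transpose q f ^^ m) vac_coeff) (replicate k f)
        + (Ghat_transpose q f ^^ m) vac_coeff (replicate (Suc k) f)"
    unfolding funpow.simps o_apply Ghat_transpose_def[of q f "(Ghat_transpose q f ^^ m) vac_coeff"]
    by simp
  then show ?case by (simp only: ann Suc.IH mixed_moment.simps)
qed

lemma vac_expectation_Ghat_power:
  fixes f :: "'a::real_inner"
  assumes "norm f = 1"
  shows "fock_inner q ((Ghat q f ^^ m) vac) vac = mixed_moment q m 0"
proof -
  have "inner f f = 1" using assms by (simp add: power2_norm_eq_inner[symmetric])
  then show ?thesis
    using vac_expectation_foldr_Ghat[of q "replicate m f"] Ghat_transpose_power_replicate[where k = 0]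
    by simp
qed

lemma hermI_recurrence:
  "x * hermI q k x = hermI q (Suc k) x + q ^ (k - 1) * qint q k * hermI q (k - 1) x"
  by (cases k) simp_all

lemma integrable_power_mult_hermI:
  assumes "\<And>k. integrable M (\<lambda>x. x ^ k)"
  shows "integrable M (\<lambda>x. x ^ m * hermI q k x)"
proof (induction k arbitrary: m rule: less_induct)
  case (less k)
  consider "k = 0" | "k = 1" | n where "k = Suc (Suc n)"
    by (metis One_nat_def not0_implies_Suc)
  then show ?case
  proof cases
    case 3
    have "integrable M (\<lambda>x. x ^ Suc m * hermI q (Suc n) x)"
      using less(1)[of "Suc n" "Suc m"] 3 by simp
    moreover have "integrable M (\<lambda>x. x ^ m * hermI q n x)"
      using less(1)[of n m] 3 by simp
    ultimately have "integrable M (\<lambda>x. x ^ Suc m * hermI q (Suc n) x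
        - q ^ n * qint q (Suc n) * (x ^ m * hermI q n x))"
      by (intro Bochner_Integration.integrable_diff integrable_mult_right)
    moreover have "(\<lambda>x. x ^ Suc m * hermI q (Suc n) x - q ^ n * qint q (Suc n) * (x ^ m * hermI q n x))
        = (\<lambda>x. x ^ m * hermI q k x)"
      using 3 by (simp add: fun_eq_iff algebra_simps)
    ultimately show ?thesis by metis
  next
    case 2
    then show ?thesis using assms[of "Suc m"] by (simp add: mult.commute)
  qed (use assms in simp)
qed

lemma integral_power_mult_hermI:
  assumes "is_muI q \<mu>"
  shows "(\<integral>x. x ^ m * hermI q k x \<partial>\<mu>) = mixed_moment q m k"
proof (induction m arbitrary: k)
  case 0
  show ?case
  proof (cases k)
    case 0
    then show ?thesis using assms prob_space.prob_space by (auto simp: is_muI_def)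
  next
    case (Suc k')
    from assms have "\<forall>m n. m \<noteq> n \<longrightarrow> (\<integral>x. hermI q m x * hermI q n x \<partial>\<mu>) = 0"
      by (simp add: is_muI_def)
    from this[rule_format, of k 0] Suc show ?thesis by simp
  qed
next
  case (Suc m)
  have int: "integrable \<mu> (\<lambda>x. x ^ m * hermI q j x)" for j
    using assms by (intro integrable_power_mult_hermI) (auto simp: is_muI_def)
  have "x ^ Suc m * hermI q k x
      = x ^ m * hermI q (Suc k) x + q ^ (k - 1) * qint q k * (x ^ m * hermI q (k - 1) x)" for x
  proof -
    have "x ^ Suc m * hermI q k x = x ^ m * (x * hermI q k x)" by simp
    then show ?thesis unfolding hermI_recurrence by (simp add: algebra_simps)
  qed
  then show ?case
    using int by (simp add: Suc.IH)
qed

section \<open>Partial pairings\<close>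

text \<open>\<open>partial_pairings m J\<close>, for \<open>J\<close> above \<open>m\<close>, records how \<open>Ghat(f\<^sub>1) \<dots> Ghat(f\<^sub>m)\<close> take
  the tensor of the \<open>f\<^sub>j\<close>, \<open>j \<in> J\<close>, to the vacuum: an arc \<open>(i, j)\<close> means that the
  annihilator at \<open>i\<close> removes the vector created at \<open>j\<close>, so points of \<open>J\<close> can only be
  right ends.\<close>

definition pairing_box :: "nat \<Rightarrow> nat set \<Rightarrow> (nat \<times> nat) set" where
  "pairing_box m J = {(i, j). 1 \<le> i \<and> i < j \<and> i \<le> m \<and> (j \<le> m \<or> j \<in> J)}"

definition partial_pairings :: "nat \<Rightarrow> nat set \<Rightarrow> (nat \<times> nat) set set" where
  "partial_pairings m J = {V. V \<subseteq> pairing_box m J \<and>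
     (\<forall>k\<in>{1..m} \<union> J. \<exists>!p\<in>V. k = fst p \<or> k = snd p)}"

lemma partial_pairings_empty: "partial_pairings m {} = pair_partitions m"
proof -
  have "pairing_box m {} = {(i, j). 1 \<le> i \<and> i < j \<and> j \<le> m}"
    unfolding pairing_box_def by (intro Collect_cong) (auto split: prod.splits)
  then show ?thesis
    unfolding partial_pairings_def pair_partitions_def by (simp only: Un_empty_right)
qed

lemma partial_pairings_0: "partial_pairings 0 J = (if J = {} then {{}} else {})"
  by (auto simp: partial_pairings_def pairing_box_def)

lemma finite_partial_pairings: "finite J \<Longrightarrow> finite (partial_pairings m J)"
  by (rule finite_subset[of _ "Pow ({1..m} \<times> ({1..m} \<union> J))"])
    (auto simp: partial_pairings_def pairing_box_def)

lemma partial_pairing_arc: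
  "V \<in> partial_pairings m J \<Longrightarrow> p \<in> V \<Longrightarrow>
     1 \<le> fst p \<and> fst p < snd p \<and> fst p \<le> m \<and> (snd p \<le> m \<or> snd p \<in> J)"
  by (auto simp: partial_pairings_def pairing_box_def)

lemma finite_partial_pairing: "finite J \<Longrightarrow> V \<in> partial_pairings m J \<Longrightarrow> finite V"
  by (rule finite_subset[of _ "{1..m} \<times> ({1..m} \<union> J)"]) (auto dest: partial_pairing_arc)

lemma partial_pairing_cover:
  "V \<in> partial_pairings m J \<Longrightarrow> k \<in> {1..m} \<union> J \<Longrightarrow> \<exists>!p\<in>V. k = fst p \<or> k = snd p"
  by (simp add: partial_pairings_def)

lemma partial_pairing_unique:
  "V \<in> partial_pairings m J \<Longrightarrow> k \<in> {1..m} \<union> J \<Longrightarrow> p \<in> V \<Longrightarrow> p' \<in> V \<Longrightarrow>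
     k = fst p \<or> k = snd p \<Longrightarrow> k = fst p' \<or> k = snd p' \<Longrightarrow> p = p'"
  using partial_pairing_cover by blast

lemma top_arc_notin_partial_pairing: "V \<in> partial_pairings m J \<Longrightarrow> (Suc m, j) \<notin> V"
  using partial_pairing_arc by fastforce

lemma ex1_arc_insert_other:
  "k \<noteq> fst a \<Longrightarrow> k \<noteq> snd a \<Longrightarrow>
     (\<exists>!p\<in>insert a V. k = fst p \<or> k = snd p) \<longleftrightarrow> (\<exists>!p\<in>V. k = fst p \<or> k = snd p)"
  by auto

lemma ex1_arc_insert_own:
  "k = fst a \<or> k = snd a \<Longrightarrow> \<forall>p\<in>V. k \<noteq> fst p \<and> k \<noteq> snd p \<Longrightarrow>
     \<exists>!p\<in>insert a V. k = fst p \<or> k = snd p"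
  by auto

lemma partial_pairings_insert_top_arc:
  assumes J: "\<forall>x\<in>J. Suc m < x" and "j \<in> J" and V: "V \<in> partial_pairings m (J - {j})"
  shows "insert (Suc m, j) V \<in> partial_pairings (Suc m) J"
proof -
  have untouched: "\<forall>p\<in>V. k \<noteq> fst p \<and> k \<noteq> snd p" if "k = Suc m \<or> k = j" for k
  proof
    fix p assume "p \<in> V"
    then have "fst p \<le> m" "snd p \<le> m \<or> snd p \<in> J - {j}"
      using partial_pairing_arc[OF V] by auto
    then show "k \<noteq> fst p \<and> k \<noteq> snd p"
      using that J \<open>j \<in> J\<close> by auto
  qed
  have "(Suc m, j) \<in> pairing_box (Suc m) J"
    using J \<open>j \<in> J\<close> by (auto simp: pairing_box_def)
  moreover have "V \<subseteq> pairing_box (Suc m) J"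
  proof
    fix p assume "p \<in> V"
    then show "p \<in> pairing_box (Suc m) J"
      using partial_pairing_arc[OF V \<open>p \<in> V\<close>] by (cases p) (auto simp: pairing_box_def)
  qed
  moreover have "\<exists>!p\<in>insert (Suc m, j) V. k = fst p \<or> k = snd p" if "k \<in> {1..Suc m} \<union> J" for k
  proof (cases "k = Suc m \<or> k = j")
    case True
    then show ?thesis
      using ex1_arc_insert_own[of k "(Suc m, j)" V] untouched[OF True] by simp
  next
    case False
    with that have "\<exists>!p\<in>V. k = fst p \<or> k = snd p"
      by (intro partial_pairing_cover[OF V]) auto
    then show ?thesis
      using ex1_arc_insert_other[of k "(Suc m, j)" V] False by simp
  qed
  ultimately show ?thesis by (simp add: partial_pairings_def)
qed

lemma partial_pairings_remove_top_arc:
  assumes J: "\<forall>x\<in>J. Suc m < x" and V: "V \<in> partial_pairings (Suc m) J"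
    and top: "(Suc m, j) \<in> V"
  shows "j \<in> J" and "V - {(Suc m, j)} \<in> partial_pairings m (J - {j})"
proof -
  show "j \<in> J" using partial_pairing_arc[OF V top] by auto
  have untouched: "k \<noteq> fst p \<and> k \<noteq> snd p"
    if p: "p \<in> V - {(Suc m, j)}" and k: "k = Suc m \<or> k = j" for p k
  proof -
    have "k \<in> {1..Suc m} \<union> J" using k \<open>j \<in> J\<close> by auto
    moreover have "k = fst (Suc m, j) \<or> k = snd (Suc m, j)" using k by simp
    ultimately have "k = fst p \<or> k = snd p \<Longrightarrow> p = (Suc m, j)"
      using partial_pairing_unique[OF V _ _ top] p by blast
    then show ?thesis using p by blast
  qed
  have "V - {(Suc m, j)} \<subseteq> pairing_box m (J - {j})"
  proof
    fix p assume p: "p \<in> V - {(Suc m, j)}"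
    then have "fst p \<noteq> Suc m" "snd p \<noteq> Suc m" "snd p \<noteq> j"
      using untouched[OF p] by auto
    with partial_pairing_arc[OF V, of p] p show "p \<in> pairing_box m (J - {j})"
      by (cases p) (auto simp: pairing_box_def)
  qed
  moreover have "\<exists>!p\<in>V - {(Suc m, j)}. k = fst p \<or> k = snd p" if "k \<in> {1..m} \<union> (J - {j})" for k
  proof -
    have "k \<noteq> Suc m" "k \<noteq> j" using that J \<open>j \<in> J\<close> by auto
    then have "(\<exists>!p\<in>V. k = fst p \<or> k = snd p) \<longleftrightarrow> (\<exists>!p\<in>V - {(Suc m, j)}. k = fst p \<or> k = snd p)"
      by (intro ex1_arc_insert_other[of k "(Suc m, j)" "V - {(Suc m, j)}",
            unfolded insert_Diff[OF top]]) simp_all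
    moreover have "\<exists>!p\<in>V. k = fst p \<or> k = snd p"
      by (rule partial_pairing_cover[OF V]) (use that in auto)
    ultimately show ?thesis by (rule iffD1)
  qed
  ultimately show "V - {(Suc m, j)} \<in> partial_pairings m (J - {j})"
    by (simp add: partial_pairings_def)
qed

lemma partial_pairings_top_right_end:
  "V \<in> partial_pairings (Suc m) J \<and> (\<forall>j. (Suc m, j) \<notin> V) \<longleftrightarrow>
     V \<in> partial_pairings m (insert (Suc m) J)"
proof -
  have box: "p \<in> pairing_box (Suc m) J \<and> fst p \<noteq> Suc m \<longleftrightarrow>
      p \<in> pairing_box m (insert (Suc m) J)" for p
    by (cases p) (auto simp: pairing_box_def)
  have "(\<forall>j. (Suc m, j) \<notin> V) \<longleftrightarrow> (\<forall>p\<in>V. fst p \<noteq> Suc m)"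
    by (metis fst_conv surjective_pairing)
  then have "V \<subseteq> pairing_box (Suc m) J \<and> (\<forall>j. (Suc m, j) \<notin> V) \<longleftrightarrow>
      V \<subseteq> pairing_box m (insert (Suc m) J)"
    unfolding subset_iff box[symmetric] by blast
  moreover have ends: "{1..Suc m} \<union> J = {1..m} \<union> insert (Suc m) J" by auto
  ultimately show ?thesis
    unfolding partial_pairings_def mem_Collect_eq ends by blast
qed

lemma partial_pairings_Suc:
  assumes J: "\<forall>x\<in>J. Suc m < x"
  shows "partial_pairings (Suc m) J
    = (\<Union>j\<in>J. insert (Suc m, j) ` partial_pairings m (J - {j}))
      \<union> partial_pairings m (insert (Suc m) J)"
proof (intro equalityI subsetI)
  fix V assume V: "V \<in> partial_pairings (Suc m) J"
  show "V \<in> (\<Union>j\<in>J. insert (Suc m, j) ` partial_pairings m (J - {j}))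
      \<union> partial_pairings m (insert (Suc m) J)"
  proof (cases "\<exists>j. (Suc m, j) \<in> V")
    case True
    then obtain j where top: "(Suc m, j) \<in> V" by blast
    then have "V = insert (Suc m, j) (V - {(Suc m, j)})" by blast
    from rev_image_eqI[where f = "insert (Suc m, j)",
        OF partial_pairings_remove_top_arc(2)[OF J V top] this]
    show ?thesis using partial_pairings_remove_top_arc(1)[OF J V top] by (intro UnI1 UN_I)
  next
    case False
    have "V \<in> partial_pairings m (insert (Suc m) J)"
      by (rule iffD1[OF partial_pairings_top_right_end]) (use V False in blast)
    then show ?thesis by (rule UnI2)
  qed
next
  fix V assume "V \<in> (\<Union>j\<in>J. insert (Suc m, j) ` partial_pairings m (J - {j}))
      \<union> partial_pairings m (insert (Suc m) J)"
  then consider (arc) j V'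
      where "j \<in> J" "V' \<in> partial_pairings m (J - {j})" "V = insert (Suc m, j) V'"
    | (right_end) "V \<in> partial_pairings m (insert (Suc m) J)"
    by blast
  then show "V \<in> partial_pairings (Suc m) J"
  proof cases
    case arc
    then show ?thesis using partial_pairings_insert_top_arc[OF J] by simp
  next
    case right_end
    then show ?thesis using partial_pairings_top_right_end by blast
  qed
qed

text \<open>The power of \<open>q\<close> produced when the annihilator at \<open>i\<close> removes \<open>f\<^sub>j\<close>: the arcs
  open at \<open>i\<close> other than \<open>(i, j)\<close> are the other vectors present in the tensor (the
  factor \<open>q ^ (n - 1)\<close> of \<open>ann\<close>), and those closing before \<open>j\<close> stand left of \<open>f\<^sub>j\<close>
  (the factor \<open>q ^ k\<close>).\<close>

definition arc_exponent :: "(nat \<times> nat) set \<Rightarrow> nat \<Rightarrow> nat \<Rightarrow> nat" where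
  "arc_exponent V i j = card {p\<in>V. fst p < i \<and> i < snd p}
     + card {p\<in>V. fst p < i \<and> i < snd p \<and> snd p < j}"

definition pairing_weight :: "real \<Rightarrow> (nat \<Rightarrow> 'a::real_inner) \<Rightarrow> (nat \<times> nat) set \<Rightarrow> real" where
  "pairing_weight q f V = (\<Prod>p\<in>V. q ^ arc_exponent V (fst p) (snd p) * inner (f (fst p)) (f (snd p)))"

lemma inj_on_snd_partial_pairing:
  assumes V: "V \<in> partial_pairings m J"
  shows "inj_on snd V"
proof (rule inj_onI)
  fix p p' assume "p \<in> V" "p' \<in> V" "snd p = snd p'"
  moreover have "snd p \<in> {1..m} \<union> J" using partial_pairing_arc[OF V \<open>p \<in> V\<close>] by auto
  ultimately show "p = p'" using partial_pairing_unique[OF V] by metis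
qed

lemma card_arcs_ending_in:
  assumes V: "V \<in> partial_pairings m J" and J: "\<forall>x\<in>J. m < x"
  shows "card {p\<in>V. snd p \<in> J \<and> Q (snd p)} = card {x\<in>J. Q x}"
proof -
  have "snd ` {p\<in>V. snd p \<in> J \<and> Q (snd p)} = {x\<in>J. Q x}"
  proof (intro equalityI subsetI)
    fix x assume x: "x \<in> {x\<in>J. Q x}"
    then obtain p where p: "p \<in> V" "x = fst p \<or> x = snd p"
      using partial_pairing_cover[OF V, of x] by auto
    moreover have "fst p < x" using partial_pairing_arc[OF V p(1)] J x by auto
    ultimately show "x \<in> snd ` {p\<in>V. snd p \<in> J \<and> Q (snd p)}" using x by auto
  qed auto
  moreover have "inj_on snd {p\<in>V. snd p \<in> J \<and> Q (snd p)}"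
    by (rule inj_on_subset[OF inj_on_snd_partial_pairing[OF V]]) auto
  ultimately show ?thesis using card_image by fastforce
qed

lemma pairing_weight_insert_top_arc:
  assumes J: "\<forall>x\<in>J. Suc m < x" and "j \<in> J" and "finite J"
    and V: "V \<in> partial_pairings m (J - {j})"
  shows "pairing_weight q f (insert (Suc m, j) V)
    = q ^ (card (J - {j}) + card {x\<in>J. x < j}) * inner (f (Suc m)) (f j) * pairing_weight q f V"
proof -
  have open_at_top: "fst p < Suc m \<and> Suc m < snd p \<longleftrightarrow> snd p \<in> J - {j}" if "p \<in> V" for p
    using partial_pairing_arc[OF V that] J by auto
  have K: "\<forall>x\<in>J - {j}. m < x" using J by auto
  have "arc_exponent (insert (Suc m, j) V) (Suc m) j
      = card {p\<in>V. snd p \<in> J - {j} \<and> True} + card {p\<in>V. snd p \<in> J - {j} \<and> snd p < j}"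
    unfolding arc_exponent_def using open_at_top
    by (intro arg_cong2[where f = "(+)"] arg_cong[where f = card]) auto
  also have "\<dots> = card {x\<in>J - {j}. True} + card {x\<in>J - {j}. x < j}"
    using card_arcs_ending_in[OF V K, of "\<lambda>_. True"] card_arcs_ending_in[OF V K, of "\<lambda>x. x < j"]
    by (simp only:)
  also have "\<dots> = card (J - {j}) + card {x\<in>J. x < j}"
    by (intro arg_cong2[where f = "(+)"] arg_cong[where f = card]) auto
  finally have exponent_top:
    "arc_exponent (insert (Suc m, j) V) (Suc m) j = card (J - {j}) + card {x\<in>J. x < j}" .
  have "arc_exponent (insert (Suc m, j) V) (fst p) (snd p) = arc_exponent V (fst p) (snd p)"
    if "p \<in> V" for p
  proof -
    have "fst p \<le> m" using partial_pairing_arc[OF V that] by simp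
    then show ?thesis
      unfolding arc_exponent_def
      by (intro arg_cong2[where f = "(+)"]) (auto intro: arg_cong[where f = card])
  qed
  then have "(\<Prod>p\<in>V. q ^ arc_exponent (insert (Suc m, j) V) (fst p) (snd p)
        * inner (f (fst p)) (f (snd p)))
      = pairing_weight q f V"
    unfolding pairing_weight_def by (intro prod.cong) auto
  moreover have "finite V" using finite_partial_pairing[OF _ V] \<open>finite J\<close> by simp
  ultimately show ?thesis
    unfolding pairing_weight_def[of q f "insert (Suc m, j) V"]
    using top_arc_notin_partial_pairing[OF V] exponent_top by simp
qed

lemma sum_pairing_weight_Suc:
  assumes J: "\<forall>x\<in>J. Suc m < x" and "finite J"
  shows "(\<Sum>V\<in>partial_pairings (Suc m) J. pairing_weight q f V)
    = (\<Sum>j\<in>J. q ^ (card (J - {j}) + card {x\<in>J. x < j}) * inner (f (Suc m)) (f j)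
         * (\<Sum>V\<in>partial_pairings m (J - {j}). pairing_weight q f V))
      + (\<Sum>V\<in>partial_pairings m (insert (Suc m) J). pairing_weight q f V)"
proof -
  define A where "A j = insert (Suc m, j) ` partial_pairings m (J - {j})" for j
  have inj: "inj_on (insert (Suc m, j)) (partial_pairings m (J - {j}))" for j
    by (rule inj_onI) (metis insert_ident top_arc_notin_partial_pairing)
  have disjoint_arcs: "A i \<inter> A j = {}" if "i \<noteq> j" for i j
    using that top_arc_notin_partial_pairing unfolding A_def by blast
  have disjoint_right_end: "(\<Union>j\<in>J. A j) \<inter> partial_pairings m (insert (Suc m) J) = {}"
    using top_arc_notin_partial_pairing unfolding A_def by blast
  have "(\<Sum>V\<in>partial_pairings (Suc m) J. pairing_weight q f V)
      = (\<Sum>j\<in>J. \<Sum>V\<in>A j. pairing_weight q f V)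
        + (\<Sum>V\<in>partial_pairings m (insert (Suc m) J). pairing_weight q f V)"
    unfolding partial_pairings_Suc[OF J] A_def[symmetric]
    using \<open>finite J\<close> disjoint_right_end disjoint_arcs
    by (simp add: sum.union_disjoint sum.UNION_disjoint A_def finite_partial_pairings)
  also have "(\<Sum>j\<in>J. \<Sum>V\<in>A j. pairing_weight q f V)
      = (\<Sum>j\<in>J. q ^ (card (J - {j}) + card {x\<in>J. x < j}) * inner (f (Suc m)) (f j)
         * (\<Sum>V\<in>partial_pairings m (J - {j}). pairing_weight q f V))"
  proof (rule sum.cong[OF refl])
    fix j assume "j \<in> J"
    then show "(\<Sum>V\<in>A j. pairing_weight q f V)
        = q ^ (card (J - {j}) + card {x\<in>J. x < j}) * inner (f (Suc m)) (f j)
          * (\<Sum>V\<in>partial_pairings m (J - {j}). pairing_weight q f V)"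
      unfolding A_def sum.reindex[OF inj] sum_distrib_left o_def
      using pairing_weight_insert_top_arc[OF J \<open>j \<in> J\<close> \<open>finite J\<close>] by (intro sum.cong) auto
  qed
  finally show ?thesis .
qed

lemma take_drop_nth_eq_filter:
  assumes "distinct xs" "k < length xs"
  shows "take k xs @ drop (Suc k) xs = filter (\<lambda>x. x \<noteq> xs ! k) xs"
proof -
  define ys z zs where "ys = take k xs" and "z = xs ! k" and "zs = drop (Suc k) xs"
  have xs: "xs = ys @ z # zs"
    unfolding ys_def z_def zs_def using assms(2) by (rule id_take_nth_drop)
  from assms(1) have "z \<notin> set ys" "z \<notin> set zs" by (simp_all add: xs)
  then have "filter (\<lambda>x. x \<noteq> z) ys = ys" "filter (\<lambda>x. x \<noteq> z) zs = zs"
    by (auto simp: filter_id_conv)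
  then have "ys @ zs = filter (\<lambda>x. x \<noteq> z) (ys @ z # zs)" by simp
  then show ?thesis
    unfolding ys_def[symmetric] z_def[symmetric] zs_def[symmetric] by (simp add: xs)
qed

lemma card_less_nth_sorted:
  fixes xs :: "'a::linorder list"
  assumes "sorted_wrt (<) xs" "k < length xs"
  shows "card {x\<in>set xs. x < xs ! k} = k"
proof -
  define ys z zs where "ys = take k xs" and "z = xs ! k" and "zs = drop (Suc k) xs"
  have xs: "xs = ys @ z # zs"
    unfolding ys_def z_def zs_def using assms(2) by (rule id_take_nth_drop)
  from assms(1) have sorted: "sorted_wrt (<) (ys @ z # zs)" by (simp add: xs)
  then have "{x\<in>set (ys @ z # zs). x < z} = set ys"
    by (auto simp: sorted_wrt_append)
  moreover have "distinct ys" using sorted by (simp add: strict_sorted_iff sorted_wrt_append)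
  moreover have "length ys = k" using assms(2) by (simp add: ys_def)
  ultimately show ?thesis
    unfolding z_def[symmetric] by (simp add: xs distinct_card)
qed

lemma ann_transpose_map_sorted:
  fixes js :: "'b::linorder list"
  assumes "sorted_wrt (<) js"
  shows "ann_transpose q g T (map f js)
    = (\<Sum>j\<in>set js. q ^ (card (set js - {j}) + card {x\<in>set js. x < j}) * inner (f j) g
        * T (map f (filter (\<lambda>x. x \<noteq> j) js)))"
    (is "_ = (\<Sum>j\<in>set js. ?c j)")
proof -
  have distinct: "distinct js" using assms by (simp add: strict_sorted_iff)
  have "ann_transpose q g T (map f js) = (\<Sum>k<length js. ?c (js ! k))"
    unfolding ann_transpose_def
  proof (rule sum.cong)
    fix k assume "k \<in> {..<length js}"
    then have cards: "card (set js - {js ! k}) = length js - 1" "card {x\<in>set js. x < js ! k} = k"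
      using distinct card_less_nth_sorted[OF assms] by (simp_all add: distinct_card)
    from \<open>k \<in> {..<length js}\<close> show "q ^ (length (map f js) - 1) * q ^ k * inner (map f js ! k) g
        * T (take k (map f js) @ drop (Suc k) (map f js)) = ?c (js ! k)"
      unfolding cards power_add
      by (simp add: take_map drop_map take_drop_nth_eq_filter[OF distinct, symmetric])
  qed simp
  also have "\<dots> = (\<Sum>j\<in>set js. ?c j)"
    using distinct
    by (simp add: sum_list_distinct_conv_sum_set[symmetric] sum_list_sum_nth atLeast0LessThan)
  finally show ?thesis .
qed

lemma vac_coeff_fold_Ghat_transpose:
  fixes f :: "nat \<Rightarrow> 'a::real_inner"
  assumes "sorted_wrt (<) js" and "\<forall>j\<in>set js. m < j"
  shows "fold (Ghat_transpose q) (map f [1..<m+1]) vac_coeff (map f js)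
    = (\<Sum>V\<in>partial_pairings m (set js). pairing_weight q f V)"
  using assms
proof (induction m arbitrary: js)
  case 0
  then show ?case by (simp add: vac_coeff_def partial_pairings_0 pairing_weight_def)
next
  case (Suc m)
  let ?W = "fold (Ghat_transpose q) (map f [1..<m+1]) vac_coeff"
  let ?J = "set js"
  have J: "\<forall>x\<in>?J. Suc m < x" using Suc.prems(2) by simp
  have IH_removed: "?W (map f (filter (\<lambda>x. x \<noteq> j) js))
      = (\<Sum>V\<in>partial_pairings m (?J - {j}). pairing_weight q f V)" for j
  proof -
    have "sorted_wrt (<) (filter (\<lambda>x. x \<noteq> j) js)"
      using Suc.prems(1) by (rule sorted_wrt_filter)
    moreover have "\<forall>x\<in>set (filter (\<lambda>x. x \<noteq> j) js). m < x" using J by auto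
    moreover have "set (filter (\<lambda>x. x \<noteq> j) js) = ?J - {j}" by auto
    ultimately show ?thesis using Suc.IH by (simp only:)
  qed
  have IH_right_end: "?W (f (Suc m) # map f js)
      = (\<Sum>V\<in>partial_pairings m (insert (Suc m) ?J). pairing_weight q f V)"
  proof -
    have sorted: "sorted_wrt (<) (Suc m # js)" using Suc.prems(1) J by simp
    have bound: "\<forall>x\<in>set (Suc m # js). m < x" using J by auto
    from Suc.IH[OF sorted bound] show ?thesis by (simp del: upt_Suc)
  qed
  have "map f [1..<Suc m+1] = map f [1..<m+1] @ [f (Suc m)]" by simp
  then have "fold (Ghat_transpose q) (map f [1..<Suc m+1]) vac_coeff
      = Ghat_transpose q (f (Suc m)) ?W"
    by simp
  then have "fold (Ghat_transpose q) (map f [1..<Suc m+1]) vac_coeff (map f js)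
      = ann_transpose q (f (Suc m)) ?W (map f js) + ?W (f (Suc m) # map f js)"
    by (simp only: Ghat_transpose_def)
  also have "\<dots> = (\<Sum>j\<in>?J. q ^ (card (?J - {j}) + card {x\<in>?J. x < j}) * inner (f (Suc m)) (f j)
        * (\<Sum>V\<in>partial_pairings m (?J - {j}). pairing_weight q f V))
      + (\<Sum>V\<in>partial_pairings m (insert (Suc m) ?J). pairing_weight q f V)"
    unfolding ann_transpose_map_sorted[OF Suc.prems(1)] IH_removed IH_right_end
    by (simp add: inner_commute)
  also have "\<dots> = (\<Sum>V\<in>partial_pairings (Suc m) ?J. pairing_weight q f V)"
    by (rule sum_pairing_weight_Suc[OF J finite_set, symmetric])
  finally show ?case .
qed

section \<open>Crossings and nestings of pair partitions\<close>

lemma pair_partition_arc: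
  "V \<in> pair_partitions m \<Longrightarrow> p \<in> V \<Longrightarrow> 1 \<le> fst p \<and> fst p < snd p \<and> snd p \<le> m"
  unfolding pair_partitions_def by auto

lemma finite_pair_partition: "V \<in> pair_partitions m \<Longrightarrow> finite V"
  by (rule finite_subset[of _ "{1..m} \<times> {1..m}"]) (auto dest: pair_partition_arc)

lemma pair_partition_unique:
  "V \<in> pair_partitions m \<Longrightarrow> k \<in> {1..m} \<Longrightarrow> p \<in> V \<Longrightarrow> p' \<in> V \<Longrightarrow>
     k = fst p \<or> k = snd p \<Longrightarrow> k = fst p' \<or> k = snd p' \<Longrightarrow> p = p'"
  unfolding pair_partitions_def by blast

lemma sum_arcs_touching:
  assumes V: "V \<in> pair_partitions m" and k: "k \<in> {1..m}"
  shows "(\<Sum>p\<in>V. of_bool (fst p = k) + of_bool (snd p = k) :: nat) = 1"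
proof -
  obtain p0 where p0: "p0 \<in> V" "k = fst p0 \<or> k = snd p0"
    using V k unfolding pair_partitions_def by blast
  have "(\<Sum>p\<in>V - {p0}. of_bool (fst p = k) + of_bool (snd p = k) :: nat) = 0"
  proof (rule sum.neutral, rule ballI)
    fix p assume p: "p \<in> V - {p0}"
    then have "\<not> (k = fst p \<or> k = snd p)"
      using pair_partition_unique[OF V k p0(1) _ p0(2)] by blast
    then show "(of_bool (fst p = k) + of_bool (snd p = k) :: nat) = 0" by auto
  qed
  moreover have "fst p0 < snd p0" using pair_partition_arc[OF V p0(1)] by simp
  ultimately show ?thesis
    unfolding sum.remove[OF finite_pair_partition[OF V] p0(1)] using p0(2) by auto
qed

lemma card_filter_eq_sum_of_bool: "finite A \<Longrightarrow> card {x\<in>A. Q x} = (\<Sum>x\<in>A. of_bool (Q x) :: nat)"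
  by (simp add: Int_def conj_commute)

lemma card_pairs_eq_double_sum:
  assumes "finite V"
  shows "card {((a, b), (c, d)). (a, b) \<in> V \<and> (c, d) \<in> V \<and> R a b c d}
    = (\<Sum>p\<in>V. \<Sum>p'\<in>V. of_bool (R (fst p) (snd p) (fst p') (snd p')) :: nat)"
proof -
  have "{((a, b), (c, d)). (a, b) \<in> V \<and> (c, d) \<in> V \<and> R a b c d}
      = {x\<in>V \<times> V. R (fst (fst x)) (snd (fst x)) (fst (snd x)) (snd (snd x))}"
    by auto
  then have "card {((a, b), (c, d)). (a, b) \<in> V \<and> (c, d) \<in> V \<and> R a b c d}
      = (\<Sum>x\<in>V \<times> V. of_bool (R (fst (fst x)) (snd (fst x)) (fst (snd x)) (snd (snd x))) :: nat)"
    using assms by (simp add: card_filter_eq_sum_of_bool)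
  also have "\<dots> = (\<Sum>p\<in>V. \<Sum>p'\<in>V. of_bool (R (fst p) (snd p) (fst p') (snd p')) :: nat)"
    by (simp add: sum.cartesian_product case_prod_beta)
  finally show ?thesis .
qed

lemma pbr_eq_double_sum:
  "finite V \<Longrightarrow>
     pbr V = (\<Sum>p\<in>V. \<Sum>p'\<in>V. of_bool (fst p < fst p' \<and> fst p' < snd p' \<and> snd p' < snd p))"
  unfolding pbr_def by (rule card_pairs_eq_double_sum)

lemma cr_eq_double_sum:
  "finite V \<Longrightarrow>
     cr V = (\<Sum>p\<in>V. \<Sum>p'\<in>V. of_bool (fst p < fst p' \<and> fst p' < snd p \<and> snd p < snd p'))"
  unfolding cr_def by (rule card_pairs_eq_double_sum)

lemma cr_eq_double_sum':
  "finite V \<Longrightarrow>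
     cr V = (\<Sum>p\<in>V. \<Sum>p'\<in>V. of_bool (fst p' < fst p \<and> fst p < snd p' \<and> snd p' < snd p))"
  unfolding cr_eq_double_sum by (rule sum.swap)

lemma sum_left_end_inside:
  assumes V: "V \<in> pair_partitions m"
  shows "(\<Sum>p\<in>V. \<Sum>p'\<in>V. of_bool (fst p < fst p' \<and> fst p' < snd p) :: nat) = pbr V + cr V"
proof -
  have fin: "finite V" by (rule finite_pair_partition[OF V])
  have "(\<Sum>p\<in>V. \<Sum>p'\<in>V. of_bool (fst p < fst p' \<and> fst p' < snd p) :: nat)
     = (\<Sum>p\<in>V. \<Sum>p'\<in>V. of_bool (fst p < fst p' \<and> fst p' < snd p' \<and> snd p' < snd p)
         + of_bool (fst p < fst p' \<and> fst p' < snd p \<and> snd p < snd p'))"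
  proof (intro sum.cong refl)
    fix p p' assume p: "p \<in> V" and p': "p' \<in> V"
    have a: "fst p' < snd p'" "1 \<le> fst p" "fst p < snd p" "snd p \<le> m"
      using pair_partition_arc[OF V p] pair_partition_arc[OF V p'] by auto
    have "snd p = snd p' \<Longrightarrow> p = p'" using pair_partition_unique[OF V _ p p', of "snd p"] a by auto
    then show "(of_bool (fst p < fst p' \<and> fst p' < snd p) :: nat)
      = of_bool (fst p < fst p' \<and> fst p' < snd p' \<and> snd p' < snd p)
        + of_bool (fst p < fst p' \<and> fst p' < snd p \<and> snd p < snd p')"
      using a by (cases "snd p' < snd p"; cases "snd p = snd p'") auto
  qed
  also have "\<dots> = pbr V + cr V"
    by (simp add: sum.distrib pbr_eq_double_sum[OF fin] cr_eq_double_sum[OF fin])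
  finally show ?thesis .
qed

lemma sum_right_end_inside:
  assumes V: "V \<in> pair_partitions m"
  shows "(\<Sum>p\<in>V. \<Sum>p'\<in>V. of_bool (fst p < snd p' \<and> snd p' < snd p) :: nat) = pbr V + cr V"
proof -
  have fin: "finite V" by (rule finite_pair_partition[OF V])
  have "(\<Sum>p\<in>V. \<Sum>p'\<in>V. of_bool (fst p < snd p' \<and> snd p' < snd p) :: nat)
     = (\<Sum>p\<in>V. \<Sum>p'\<in>V. of_bool (fst p < fst p' \<and> fst p' < snd p' \<and> snd p' < snd p)
         + of_bool (fst p' < fst p \<and> fst p < snd p' \<and> snd p' < snd p))"
  proof (intro sum.cong refl)
    fix p p' assume p: "p \<in> V" and p': "p' \<in> V"
    have a: "fst p' < snd p'" "1 \<le> fst p" "fst p < snd p" "snd p \<le> m"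
      using pair_partition_arc[OF V p] pair_partition_arc[OF V p'] by auto
    have "fst p = fst p' \<Longrightarrow> p = p'" using pair_partition_unique[OF V _ p p', of "fst p"] a by auto
    then show "(of_bool (fst p < snd p' \<and> snd p' < snd p) :: nat)
      = of_bool (fst p < fst p' \<and> fst p' < snd p' \<and> snd p' < snd p)
        + of_bool (fst p' < fst p \<and> fst p < snd p' \<and> snd p' < snd p)"
      using a by (cases "fst p' < fst p"; cases "fst p = fst p'") auto
  qed
  also have "\<dots> = pbr V + cr V"
    by (simp add: sum.distrib pbr_eq_double_sum[OF fin] cr_eq_double_sum'[OF fin])
  finally show ?thesis .
qed

lemma sum_arc_exponent:
  assumes V: "V \<in> pair_partitions m"
  shows "(\<Sum>p\<in>V. arc_exponent V (fst p) (snd p)) = pbr V + 2 * cr V"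
proof -
  have fin: "finite V" by (rule finite_pair_partition[OF V])
  have "(\<Sum>p\<in>V. arc_exponent V (fst p) (snd p))
      = (\<Sum>p\<in>V. \<Sum>p'\<in>V. of_bool (fst p' < fst p \<and> fst p < snd p') :: nat)
        + (\<Sum>p\<in>V. \<Sum>p'\<in>V. of_bool (fst p' < fst p \<and> fst p < snd p' \<and> snd p' < snd p))"
    unfolding arc_exponent_def by (simp add: card_filter_eq_sum_of_bool[OF fin] sum.distrib)
  also have "(\<Sum>p\<in>V. \<Sum>p'\<in>V. of_bool (fst p' < fst p \<and> fst p < snd p') :: nat) = pbr V + cr V"
    by (subst sum.swap) (rule sum_left_end_inside[OF V])
  finally show ?thesis by (simp add: cr_eq_double_sum'[OF fin])
qed

lemma ip_eq_twice_pbr_cr: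
  assumes V: "V \<in> pair_partitions m"
  shows "ip V = 2 * (pbr V + cr V)"
proof -
  have "snd p - fst p - 1
      = (\<Sum>p'\<in>V. of_bool (fst p < fst p' \<and> fst p' < snd p) + of_bool (fst p < snd p' \<and> snd p' < snd p))"
    if p: "p \<in> V" for p
  proof -
    have a: "1 \<le> fst p" "snd p \<le> m" using pair_partition_arc[OF V p] by auto
    have "snd p - fst p - 1 = (\<Sum>k\<in>{fst p<..<snd p}. 1)" by simp
    also have "\<dots> = (\<Sum>k\<in>{fst p<..<snd p}. \<Sum>p'\<in>V. of_bool (fst p' = k) + of_bool (snd p' = k))"
      using sum_arcs_touching[OF V] a by (intro sum.cong refl) auto
    also have "\<dots> = (\<Sum>p'\<in>V. \<Sum>k\<in>{fst p<..<snd p}. of_bool (fst p' = k) + of_bool (snd p' = k))"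
      by (rule sum.swap)
    also have "\<dots> = (\<Sum>p'\<in>V. of_bool (fst p < fst p' \<and> fst p' < snd p)
        + of_bool (fst p < snd p' \<and> snd p' < snd p))"
      by (simp add: sum.distrib of_bool_def sum.delta')
    finally show ?thesis .
  qed
  then have "ip V = (\<Sum>p\<in>V. \<Sum>p'\<in>V. of_bool (fst p < fst p' \<and> fst p' < snd p)
      + of_bool (fst p < snd p' \<and> snd p' < snd p))"
    unfolding ip_def by (simp add: case_prod_beta)
  also have "\<dots> = 2 * (pbr V + cr V)"
    by (simp add: sum.distrib sum_left_end_inside[OF V] sum_right_end_inside[OF V])
  finally show ?thesis .
qed

lemma sqrt_power_ip:
  assumes "0 \<le> q" and V: "V \<in> pair_partitions m"
  shows "sqrt q ^ ip V * q ^ cr V = q ^ (pbr V + 2 * cr V)"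
proof -
  have "sqrt q ^ ip V = (sqrt q ^ 2) ^ (pbr V + cr V)"
    unfolding ip_eq_twice_pbr_cr[OF V] power_mult ..
  then show ?thesis using assms(1) by (simp add: power_add mult_2)
qed

lemma pairing_weight_pair_partition:
  assumes "0 \<le> q" and V: "V \<in> pair_partitions m"
  shows "pairing_weight q f V = sqrt q ^ ip V * q ^ cr V * (\<Prod>(i, j)\<in>V. inner (f i) (f j))"
proof -
  have "pairing_weight q f V
      = q ^ (\<Sum>p\<in>V. arc_exponent V (fst p) (snd p)) * (\<Prod>p\<in>V. inner (f (fst p)) (f (snd p)))"
    unfolding pairing_weight_def power_sum by (rule prod.distrib)
  then show ?thesis
    using sqrt_power_ip[OF assms] by (simp add: sum_arc_exponent[OF V] case_prod_beta)
qed

lemma vac_expectation_pair_partitions: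
  fixes f :: "nat \<Rightarrow> 'a::real_inner"
  assumes "0 \<le> q"
  shows "fock_inner q (foldr (Ghat q) (map f [1..<m+1]) vac) vac
    = (\<Sum>V\<in>pair_partitions m. sqrt q ^ ip V * q ^ cr V * (\<Prod>(i, j)\<in>V. inner (f i) (f j)))"
proof -
  have "fock_inner q (foldr (Ghat q) (map f [1..<m+1]) vac) vac
      = (\<Sum>V\<in>partial_pairings m (set []). pairing_weight q f V)"
    using vac_coeff_fold_Ghat_transpose[of "[]" m q f] by (simp add: vac_expectation_foldr_Ghat)
  then show ?thesis
    by (simp add: partial_pairings_empty pairing_weight_pair_partition[OF assms])
qed

lemma vac_expectation_Ghat_power_pair_partitions:
  fixes f :: "'a::real_inner"
  assumes "0 \<le> q" and "norm f = 1"
  shows "fock_inner q ((Ghat q f ^^ m) vac) vac = (\<Sum>V\<in>pair_partitions m. q ^ (pbr V + 2 * cr V))"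
proof -
  have "inner f f = 1" using assms(2) by (simp add: power2_norm_eq_inner[symmetric])
  moreover have "map (\<lambda>_. f) [1..<m+1] = replicate m f" by (simp add: map_replicate_const)
  ultimately show ?thesis
    using vac_expectation_pair_partitions[OF assms(1), of "\<lambda>_. f" m] sqrt_power_ip[OF assms(1)]
    by simp
qed

theorem theorem5:
  fixes q :: real
  assumes "0 \<le> q" and "q \<le> 1"
  shows
    "(\<forall>(n::nat) (f :: nat \<Rightarrow> 'a::{real_inner, complete_space}).
        (\<forall>i\<in>{1..2*n}. norm (f i) = 1) \<longrightarrow>
        fock_inner q (foldr (Ghat q) (map f [1..<2*n+1]) vac) vac
          = (\<Sum>V\<in>pair_partitions (2*n).
               sqrt q ^ ip V * q ^ cr V * (\<Prod>(i, j)\<in>V. inner (f i) (f j))))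
   \<and> (\<forall>(n::nat) (f :: 'a) (\<mu> :: real measure).
        norm f = 1 \<longrightarrow> 1 \<le> n \<longrightarrow> is_muI q \<mu> \<longrightarrow>
          (\<integral>x. x ^ (2*n) \<partial>\<mu>) = fock_inner q ((Ghat q f ^^ (2*n)) vac) vac
        \<and> fock_inner q ((Ghat q f ^^ (2*n)) vac) vac = (\<Prod>k\<in>{1..n}. qint q (2*k - 1))
        \<and> (\<Prod>k\<in>{1..n}. qint q (2*k - 1)) = (\<Sum>V\<in>pair_partitions (2*n). q ^ (pbr V + 2 * cr V))
        \<and> (\<forall>V\<in>pair_partitions (2*n). real (pbr V + 2 * cr V) = real (ip V) / 2 + real (cr V)))
   \<and> (\<forall>(f :: 'a) g (u :: 'a fock).
        fock_null q
          (fock_diff (fock_diff (ann q f (cre g u)) (fock_scale (q^2) (cre g (ann q f u))))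
                     (fock_scale (inner f g) (qN q u))))"
proof (intro conjI allI impI ballI)
  fix n :: nat and f :: "nat \<Rightarrow> 'a"
  show "fock_inner q (foldr (Ghat q) (map f [1..<2*n+1]) vac) vac
      = (\<Sum>V\<in>pair_partitions (2*n). sqrt q ^ ip V * q ^ cr V * (\<Prod>(i, j)\<in>V. inner (f i) (f j)))"
    by (rule vac_expectation_pair_partitions[OF assms(1)])
next
  fix n :: nat and f :: 'a and \<mu> :: "real measure"
  assume f: "norm f = 1" and \<mu>: "is_muI q \<mu>"
  show "(\<integral>x. x ^ (2*n) \<partial>\<mu>) = fock_inner q ((Ghat q f ^^ (2*n)) vac) vac"
    using integral_power_mult_hermI[OF \<mu>, of "2*n" 0] vac_expectation_Ghat_power[OF f] by simp
  show "fock_inner q ((Ghat q f ^^ (2*n)) vac) vac = (\<Prod>k\<in>{1..n}. qint q (2*k - 1))"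
    using vac_expectation_Ghat_power[OF f] mixed_moment_even_0 by (simp add: qdfact_def)
  show "(\<Prod>k\<in>{1..n}. qint q (2*k - 1)) = (\<Sum>V\<in>pair_partitions (2*n). q ^ (pbr V + 2 * cr V))"
    using vac_expectation_Ghat_power[OF f, of q "2*n"] mixed_moment_even_0[of q n]
      vac_expectation_Ghat_power_pair_partitions[OF assms(1) f, of "2*n"]
    by (simp add: qdfact_def)
next
  fix n :: nat and V assume "V \<in> pair_partitions (2*n)"
  then show "real (pbr V + 2 * cr V) = real (ip V) / 2 + real (cr V)"
    by (simp add: ip_eq_twice_pbr_cr)
next
  fix f g :: 'a and u :: "'a fock"
  show "fock_null q (fock_diff (fock_diff (ann q f (cre g u)) (fock_scale (q^2) (cre g (ann q f u))))
      (fock_scale (inner f g) (qN q u)))"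
    by (rule ann_cre_commutation)
qed

end
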